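(* Fix $0<p\le\infty$. Let $t(x_1,\dots,x_n)$ and $s(x_1,\dots,x_n)$ be terms built from variables $x_1,\dots,x_n$, constants $r\in[0,\infty]$, and the binary operations $\otimes,\otimes^*,\oplus_p,\oplus^*_p$. Suppose that $t(a_1,\dots,a_n)\le s(a_1,\dots,a_n)$ for all $a_1,\dots,a_n\in[0,\infty]$ (operations evaluated in $[0,\infty]$). Then in any counary calculus (with $p$-structures as below) that contains the rule EFQ ($0$ / $\Gamma\vdash\Delta$ for all cedents $\Gamma,\Delta$), the rule $$\frac{t(\Gamma_1\vdash\Delta_1,\dots,\Gamma_n\vdash\Delta_n)}{s(\Gamma_1\vdash\Delta_1,\dots,\Gamma_n\vdash\Delta_n)}$$ (obtained by substituting sequents for the variables and reading the operations as formal structure operations) is admissible.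
   Context: Alethic values: $[0,\infty]$ with its usual order. Conjunctive multiplication $\otimes$ is the usual product on $(0,\infty)$, with $0\otimes a=a\otimes 0=0$ for all $a\in[0,\infty]$ and $a\otimes\infty=\infty\otimes a=\infty$ for $a\in(0,\infty]$. Inversion: $0^*=\infty$, $\infty^*=0$, $a^*=1/a$ otherwise. Disjunctive multiplication $a\otimes^* b:=(a^*\otimes b^* )^*$. Sum $\oplus$ is ordinary addition with $a\oplus\infty=\infty$; harmonic sum $a\oplus^*b:=(a^*\oplus b^* )^*$. For $0<p<\infty$ (conventions $0^p=0$, $\infty^p=\infty$): $a\oplus_p b:=(a^p\oplus b^p)^{1/p}$, $a\oplus^*_p b:=(a^p\oplus^* b^p)^{1/p}$; for $p=\infty$: $a\oplus_\infty b:=\max(a,b)$, $a\oplus^*_\infty b:=\min(a,b)$. Quantitative ($p$-hard) calculi: fix a set of formulas; a sequent is $\Gamma\vdash\Delta$ with $\Gamma,\Delta$ finite multisets of formulas. Structures: $H::=(\Gamma\vdash\Delta)\mid r\mid H\otimes H\mid H\otimes^*H\mid H\oplus_pH\mid H\oplus^*_pH$, $r\in[0,\infty]$ (formal operations). A structure with no sequent is closed and evaluates in $[0,\infty]$ to its validity. A rule is a schema $H/H'$ (premise structure, conclusion structure); a calculus is a set of rules; it is counary if every rule's conclusion is a single sequent. Derivations are defined inductively: identity $H/H$; rule instances; vertical composition of derivations $H\to I$ and $I\to K$; for $\ast\in\{\otimes,\otimes^*,\oplus_p,\oplus^*_p\}$, from derivations $H_1\to K_1$ and $H_2\to K_2$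 a derivation $H_1\ast H_2\to K_1\ast K_2$. A closed derivation has closed top structure; its validity is the value of that top. The provability $\|K\|_R$ of a structure $K$ in calculus $R$ is the supremum of validities of closed derivations in $R$ with bottom structure $K$ ($0$ if none). A rule is admissible in $R$ if adding it to $R$ does not change the provability of any structure. *)

theory Defs
  imports Complex_Main "HOL-Library.Extended_Nonnegative_Real" "HOL-Library.Multiset"
begin

definition ainv :: "ennreal \<Rightarrow> ennreal" where
  "ainv a = (if a = 0 then (top::ennreal) else if a = (top::ennreal) then 0 else inverse a)"

definition cmul :: "ennreal \<Rightarrow> ennreal \<Rightarrow> ennreal" where
  "cmul a b = (if a = 0 \<or> b = 0 then 0 else if a = (top::ennreal) \<or> b = (top::ennreal) then (top::ennreal) else a * b)"

definition dmul :: "ennreal \<Rightarrow> ennreal \<Rightarrow> ennreal" where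
  "dmul a b = ainv (cmul (ainv a) (ainv b))"

definition asum :: "ennreal \<Rightarrow> ennreal \<Rightarrow> ennreal" where
  "asum a b = (if a = (top::ennreal) \<or> b = (top::ennreal) then (top::ennreal) else a + b)"

definition hsum :: "ennreal \<Rightarrow> ennreal \<Rightarrow> ennreal" where
  "hsum a b = ainv (asum (ainv a) (ainv b))"

definition apow :: "real \<Rightarrow> ennreal \<Rightarrow> ennreal" where
  "apow q a = (if a = (top::ennreal) then (top::ennreal) else ennreal (enn2real a powr q))"

definition psum :: "ennreal \<Rightarrow> ennreal \<Rightarrow> ennreal \<Rightarrow> ennreal" where
  "psum p a b = (if p = (top::ennreal) then max a b
     else apow (1 / enn2real p) (asum (apow (enn2real p) a) (apow (enn2real p) b)))"

definition phsum :: "ennreal \<Rightarrow> ennreal \<Rightarrow> ennreal \<Rightarrow> ennreal" where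
  "phsum p a b = (if p = (top::ennreal) then min a b
     else apow (1 / enn2real p) (hsum (apow (enn2real p) a) (apow (enn2real p) b)))"

datatype bop = OTimes | OTimesD | OPlusP | OPlusPD

definition eval_op :: "ennreal \<Rightarrow> bop \<Rightarrow> ennreal \<Rightarrow> ennreal \<Rightarrow> ennreal" where
  "eval_op p f a b = (case f of OTimes \<Rightarrow> cmul a b | OTimesD \<Rightarrow> dmul a b
      | OPlusP \<Rightarrow> psum p a b | OPlusPD \<Rightarrow> phsum p a b)"

datatype aterm = TVar nat | TConst ennreal | TOp bop aterm aterm

primrec teval :: "ennreal \<Rightarrow> (nat \<Rightarrow> ennreal) \<Rightarrow> aterm \<Rightarrow> ennreal" where
  "teval p a (TVar i) = a i"
| "teval p a (TConst r) = r"
| "teval p a (TOp f t u) = eval_op p f (teval p a t) (teval p a u)"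

type_synonym 'f sequent = "'f multiset \<times> 'f multiset"

datatype 'f struct = Seq "'f multiset" "'f multiset" | SConst ennreal
  | SOp bop "'f struct" "'f struct"

primrec closed :: "'f struct \<Rightarrow> bool" where
  "closed (Seq G D) = False"
| "closed (SConst r) = True"
| "closed (SOp f H K) = (closed H \<and> closed K)"

(* validity of a structure; only meaningful for closed structures *)
primrec sval :: "ennreal \<Rightarrow> 'f struct \<Rightarrow> ennreal" where
  "sval p (Seq G D) = 0"
| "sval p (SConst r) = r"
| "sval p (SOp f H K) = eval_op p f (sval p H) (sval p K)"

(* a rule schema is represented by the set of its instances: pairs (premise, conclusion);
   a calculus is a set of rule instances *)
type_synonym 'f calculus = "('f struct \<times> 'f struct) set"

inductive derives :: "'f calculus \<Rightarrow> 'f struct \<Rightarrow> 'f struct \<Rightarrow> bool" for R where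
  d_id: "derives R H H"
| d_rule: "(H, K) \<in> R \<Longrightarrow> derives R H K"
| d_comp: "derives R H I \<Longrightarrow> derives R I K \<Longrightarrow> derives R H K"
| d_op: "derives R H1 K1 \<Longrightarrow> derives R H2 K2 \<Longrightarrow> derives R (SOp f H1 H2) (SOp f K1 K2)"

definition provability :: "ennreal \<Rightarrow> 'f calculus \<Rightarrow> 'f struct \<Rightarrow> ennreal" where
  "provability p R K = Sup {sval p H | H. closed H \<and> derives R H K}"

definition counary :: "'f calculus \<Rightarrow> bool" where
  "counary R \<longleftrightarrow> (\<forall>H K. (H, K) \<in> R \<longrightarrow> (\<exists>G D. K = Seq G D))"

definition admissible :: "ennreal \<Rightarrow> 'f calculus \<Rightarrow> 'f calculus \<Rightarrow> bool" where
  "admissible p R S \<longleftrightarrow> (\<forall>K. provability p (R \<union> S) K = provability p R K)"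

primrec tsubst :: "(nat \<Rightarrow> 'f sequent) \<Rightarrow> aterm \<Rightarrow> 'f struct" where
  "tsubst \<sigma> (TVar i) = Seq (fst (\<sigma> i)) (snd (\<sigma> i))"
| "tsubst \<sigma> (TConst r) = SConst r"
| "tsubst \<sigma> (TOp f t u) = SOp f (tsubst \<sigma> t) (tsubst \<sigma> u)"

definition term_rule :: "aterm \<Rightarrow> aterm \<Rightarrow> 'f calculus" where
  "term_rule t s = {(tsubst \<sigma> t, tsubst \<sigma> s) | \<sigma>. True}"

end

theory Submission
  imports Defs
begin

text \<open>In a counary calculus no rule has a compound conclusion, so a derivation of a compound
  structure from a closed one splits into derivations of its components. Hence every value
  provable for \<open>t(\<sigma>)\<close> is bounded by \<open>t(b)\<close> for some values \<open>b\<^sub>i\<close> that are provable for the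
  sequents \<open>\<sigma>\<^sub>i\<close> themselves (EFQ makes \<open>0\<close> provable for every sequent, and the maximum of two
  provable values is provable). Then \<open>t(b) \<le> s(b)\<close>, and \<open>s(b)\<close> is provable for \<open>s(\<sigma>)\<close> by
  combining the derivations of the \<open>b\<^sub>i\<close>. So every application of the new rule is dominated by a
  derivation in the original calculus, and monotonicity of the operations propagates this
  domination through whole derivations.\<close>

lemma ennreal_inverse_antimono: "(a::ennreal) \<le> b \<Longrightarrow> inverse b \<le> inverse a"
  by (simp add: less_eq_ennreal.rep_eq inverse_ennreal.rep_eq ereal_inverse_antimono)

lemma ainv_eq_inverse: "ainv a = inverse a"
  unfolding ainv_def by auto

lemma cmul_eq_mult: "cmul a b = a * b"
  unfolding cmul_def by (auto simp: ennreal_mult_top ennreal_top_mult)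

lemma asum_eq_add: "asum a b = a + b"
  unfolding asum_def by auto

lemma apow_mono: "0 \<le> q \<Longrightarrow> a \<le> b \<Longrightarrow> apow q a \<le> apow q b"
  unfolding apow_def
  by (auto intro!: ennreal_leI powr_mono2 enn2real_mono simp: top_unique less_top)

lemma dmul_mono: "a \<le> a' \<Longrightarrow> b \<le> b' \<Longrightarrow> dmul a b \<le> dmul a' b'"
  unfolding dmul_def ainv_eq_inverse cmul_eq_mult
  by (intro ennreal_inverse_antimono mult_mono) auto

lemma hsum_mono: "a \<le> a' \<Longrightarrow> b \<le> b' \<Longrightarrow> hsum a b \<le> hsum a' b'"
  unfolding hsum_def ainv_eq_inverse asum_eq_add
  by (intro ennreal_inverse_antimono add_mono) auto

lemma psum_mono: "a \<le> a' \<Longrightarrow> b \<le> b' \<Longrightarrow> psum p a b \<le> psum p a' b'"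
  unfolding psum_def asum_eq_add by (auto intro!: apow_mono add_mono simp: le_max_iff_disj)

lemma phsum_mono: "a \<le> a' \<Longrightarrow> b \<le> b' \<Longrightarrow> phsum p a b \<le> phsum p a' b'"
  unfolding phsum_def by (auto intro!: apow_mono hsum_mono simp: min_le_iff_disj)

lemma eval_op_mono: "a \<le> a' \<Longrightarrow> b \<le> b' \<Longrightarrow> eval_op p f a b \<le> eval_op p f a' b'"
  by (cases f) (auto simp: eval_op_def cmul_eq_mult
      intro: mult_mono dmul_mono psum_mono phsum_mono)

lemma teval_mono: "(\<And>i. b i \<le> c i) \<Longrightarrow> teval p b t \<le> teval p c t"
  by (induction t) (auto intro: eval_op_mono)

lemma derives_mono:
  assumes "derives R H K" and "R \<subseteq> R'"
  shows "derives R' H K"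
  using assms by induction (auto intro: derives.intros)

lemma counary_derives_SOpE:
  assumes "counary R" and "derives R H (SOp f K1 K2)"
  shows "\<exists>H1 H2. H = SOp f H1 H2 \<and> derives R H1 K1 \<and> derives R H2 K2"
  using assms(2,1)
proof (induction H "SOp f K1 K2" arbitrary: K1 K2 rule: derives.induct)
  case d_id
  then show ?case by (auto intro: derives.d_id)
next
  case d_rule
  then show ?case by (auto simp: counary_def)
next
  case d_comp
  then show ?case by (metis derives.d_comp)
next
  case d_op
  then show ?case by auto
qed

lemma counary_derives_SConstD:
  fixes H :: "'f struct"
  assumes "counary R" and "derives R H (SConst r)"
  shows "H = SConst r"
  using assms(2,1) by (induction H "SConst r :: 'f struct" rule: derives.induct)
    (auto simp: counary_def)

definition achievable :: "ennreal \<Rightarrow> 'f calculus \<Rightarrow> 'f struct \<Rightarrow> ennreal set" where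
  "achievable p R K = {sval p H | H. closed H \<and> derives R H K}"

lemma provability_eq_Sup_achievable: "provability p R K = Sup (achievable p R K)"
  unfolding provability_def achievable_def ..

lemma sval_achievable: "closed H \<Longrightarrow> sval p H \<in> achievable p R H"
  unfolding achievable_def by (auto intro: derives.d_id)

lemma achievable_derives: "v \<in> achievable p R H \<Longrightarrow> derives R H K \<Longrightarrow> v \<in> achievable p R K"
  unfolding achievable_def by (auto intro: derives.d_comp)

lemma achievable_SConst: "r \<in> achievable p R (SConst r)"
  using sval_achievable[of "SConst r"] by simp

lemma counary_achievable_SConst: "counary R \<Longrightarrow> achievable p R (SConst r) = {r}"
  unfolding achievable_def
  by (auto dest: counary_derives_SConstD intro!: exI[of _ "SConst r"] derives.d_id)

lemma achievable_SOp:
  assumes "v \<in> achievable p R K1" and "w \<in> achievable p R K2"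
  shows "eval_op p f v w \<in> achievable p R (SOp f K1 K2)"
proof -
  obtain H1 H2 where "closed H1" "derives R H1 K1" "v = sval p H1"
    "closed H2" "derives R H2 K2" "w = sval p H2"
    using assms unfolding achievable_def by blast
  then show ?thesis
    unfolding achievable_def by (auto intro!: exI[of _ "SOp f H1 H2"] derives.d_op)
qed

lemma counary_achievable_SOpE:
  assumes "counary R" and "u \<in> achievable p R (SOp f K1 K2)"
  shows "\<exists>v\<in>achievable p R K1. \<exists>w\<in>achievable p R K2. u = eval_op p f v w"
proof -
  obtain H where "closed H" "derives R H (SOp f K1 K2)" "u = sval p H"
    using assms(2) unfolding achievable_def by blast
  with counary_derives_SOpE[OF assms(1)] obtain H1 H2
    where "H = SOp f H1 H2" "derives R H1 K1" "derives R H2 K2" "closed H1" "closed H2"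
    by fastforce
  with \<open>u = sval p H\<close> show ?thesis
    unfolding achievable_def by auto
qed

lemma efq_achievable_zero:
  "\<forall>G D. (SConst 0, Seq G D) \<in> R \<Longrightarrow> 0 \<in> achievable p R (Seq G D)"
  unfolding achievable_def by (auto intro!: exI[of _ "SConst 0"] derives.d_rule)

lemma counary_achievable_tsubst_le_teval:
  assumes counary: "counary R" and efq: "\<forall>G D. (SConst 0, Seq G D) \<in> R"
    and "u \<in> achievable p R (tsubst \<sigma> t)"
  shows "\<exists>b. (\<forall>i. b i \<in> achievable p R (tsubst \<sigma> (TVar i))) \<and> u \<le> teval p b t"
  using assms(3)
proof (induction t arbitrary: u)
  case (TVar j)
  let ?b = "\<lambda>i. if i = j then u else 0"
  have "\<forall>i. ?b i \<in> achievable p R (tsubst \<sigma> (TVar i))"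
    using TVar efq_achievable_zero[OF efq] by simp
  then show ?case by force
next
  case (TConst r)
  then have "u = r" using counary_achievable_SConst[OF counary] by simp
  then show ?case using efq_achievable_zero[OF efq] by force
next
  case (TOp f t1 t2)
  obtain v w where v: "v \<in> achievable p R (tsubst \<sigma> t1)" and w: "w \<in> achievable p R (tsubst \<sigma> t2)"
    and u: "u = eval_op p f v w"
    using counary_achievable_SOpE[OF counary] TOp.prems by fastforce
  obtain b1 where b1: "\<forall>i. b1 i \<in> achievable p R (tsubst \<sigma> (TVar i))" "v \<le> teval p b1 t1"
    using TOp.IH(1)[OF v] by blast
  obtain b2 where b2: "\<forall>i. b2 i \<in> achievable p R (tsubst \<sigma> (TVar i))" "w \<le> teval p b2 t2"
    using TOp.IH(2)[OF w] by blast
  define b where "b i = max (b1 i) (b2 i)" for i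
  \<comment> \<open>the maximum is one of its arguments, so it stays achievable\<close>
  have "\<forall>i. b i \<in> achievable p R (tsubst \<sigma> (TVar i))"
    using b1(1) b2(1) by (simp add: b_def max_def)
  moreover have "u \<le> teval p b (TOp f t1 t2)"
  proof -
    have "b1 i \<le> b i" "b2 i \<le> b i" for i
      by (simp_all add: b_def)
    then have "v \<le> teval p b t1" "w \<le> teval p b t2"
      using b1(2) b2(2) teval_mono order_trans by metis+
    then show ?thesis
      using u by (simp add: eval_op_mono)
  qed
  ultimately show ?case by blast
qed

lemma teval_achievable:
  assumes "\<forall>i. b i \<in> achievable p R (tsubst \<sigma> (TVar i))"
  shows "teval p b s \<in> achievable p R (tsubst \<sigma> s)"
  using assms by (induction s) (auto intro: achievable_SConst achievable_SOp)

definition dominated :: "ennreal \<Rightarrow> 'f calculus \<Rightarrow> 'f struct \<Rightarrow> 'f struct \<Rightarrow> bool" where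
  "dominated p R H K \<longleftrightarrow> (\<forall>v\<in>achievable p R H. \<exists>w\<in>achievable p R K. v \<le> w)"

lemma derives_dominated: "derives R H K \<Longrightarrow> dominated p R H K"
  unfolding dominated_def by (auto intro: achievable_derives)

lemma dominated_trans: "dominated p R H I \<Longrightarrow> dominated p R I K \<Longrightarrow> dominated p R H K"
  unfolding dominated_def by (meson order_trans)

lemma counary_dominated_SOp:
  assumes counary: "counary R" and "dominated p R H1 K1" and "dominated p R H2 K2"
  shows "dominated p R (SOp f H1 H2) (SOp f K1 K2)"
  unfolding dominated_def
proof
  fix u assume "u \<in> achievable p R (SOp f H1 H2)"
  then obtain v w where "v \<in> achievable p R H1" "w \<in> achievable p R H2" "u = eval_op p f v w"
    using counary_achievable_SOpE[OF counary] by blast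
  then obtain v' w' where "v' \<in> achievable p R K1" "v \<le> v'" "w' \<in> achievable p R K2" "w \<le> w'"
    using assms(2,3) unfolding dominated_def by blast
  then show "\<exists>u'\<in>achievable p R (SOp f K1 K2). u \<le> u'"
    using \<open>u = eval_op p f v w\<close> by (blast intro: achievable_SOp eval_op_mono)
qed

lemma counary_derives_dominated:
  assumes counary: "counary R" and S: "\<forall>(H, K)\<in>S. dominated p R H K"
    and "derives (R \<union> S) H K"
  shows "dominated p R H K"
  using assms(3)
proof induction
  case (d_id H)
  then show ?case by (rule derives_dominated[OF derives.d_id])
next
  case (d_rule H K)
  then show ?case using S by (auto intro: derives_dominated derives.d_rule)
next
  case (d_comp H I K)
  then show ?case by (blast intro: dominated_trans)
next
  case (d_op H1 K1 H2 K2 f)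
  then show ?case by (blast intro: counary_dominated_SOp[OF counary])
qed

lemma counary_admissible_if_dominated:
  assumes counary: "counary R" and S: "\<forall>(H, K)\<in>S. dominated p R H K"
  shows "admissible p R S"
  unfolding admissible_def provability_eq_Sup_achievable
proof
  fix K
  have "Sup (achievable p R K) \<le> Sup (achievable p (R \<union> S) K)"
    by (rule Sup_subset_mono) (auto simp: achievable_def intro: derives_mono)
  moreover have "Sup (achievable p (R \<union> S) K) \<le> Sup (achievable p R K)"
  proof (rule Sup_mono)
    fix v assume "v \<in> achievable p (R \<union> S) K"
    then obtain H where "closed H" "derives (R \<union> S) H K" "v = sval p H"
      unfolding achievable_def by blast
    then show "\<exists>w\<in>achievable p R K. v \<le> w"
      using counary_derives_dominated[OF counary S] sval_achievable
      unfolding dominated_def by blast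
  qed
  ultimately show "Sup (achievable p (R \<union> S) K) = Sup (achievable p R K)"
    by (rule antisym[rotated])
qed

lemma term_rule_dominated:
  assumes counary: "counary R" and efq: "\<forall>G D. (SConst 0, Seq G D) \<in> R"
    and le: "\<forall>a. teval p a t \<le> teval p a s" and "(H, K) \<in> term_rule t s"
  shows "dominated p R H K"
  unfolding dominated_def
proof
  obtain \<sigma> where \<sigma>: "H = tsubst \<sigma> t" "K = tsubst \<sigma> s"
    using assms(4) by (auto simp: term_rule_def)
  fix u assume "u \<in> achievable p R H"
  then obtain b where "\<forall>i. b i \<in> achievable p R (tsubst \<sigma> (TVar i))" "u \<le> teval p b t"
    using counary_achievable_tsubst_le_teval[OF counary efq] \<sigma> by blast
  then show "\<exists>w\<in>achievable p R K. u \<le> w"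
    using teval_achievable le \<sigma> order_trans by blast
qed

theorem mainTheorem4:
  fixes p :: ennreal and t s :: aterm and R :: "'f calculus"
  assumes "0 < p"
    and "\<forall>a. teval p a t \<le> teval p a s"
    and "counary R"
    and "\<forall>G D. (SConst 0, Seq G D) \<in> R"
  shows "admissible p R (term_rule t s)"
  using assms(3) by (rule counary_admissible_if_dominated)
    (auto intro: term_rule_dominated[OF assms(3,4,2)])

end
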